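(* Let $\alpha>0$ and let $a_1,\dots,a_N,b_1,\dots,b_{N-1}$ be independent with $a_i\sim\mathcal N(0,\alpha)$, $b_i\ge0$, $b_i^2\sim\frac\alpha2\chi^2(2i/\alpha)$; let $c_i=(b_i^2-i)/\sqrt i$. Let $\theta_N=1+N^{-2/3}w_N$ with $w_N>0$, $(\log\log N)^2/w_N\to0$ and $w_N/(\log N)^2\to0$. For $1\le i\le N$ let $r_i=1+\sqrt{1-\frac{i-1}{N\theta_N^2}}$, $m_i=1-\sqrt{1-\frac{i-1}{N\theta_N^2}}$, $\gamma_i=m_i/r_i$; for $2\le i\le N$ let $\delta_i=\frac{m_i}{r_i}-\frac{m_i}{r_{i-1}}$; for $3\le i\le N$ let $\xi_i=\frac{a_i}{\sqrt N\theta_Nr_i}+\sqrt{\frac{m_i}{r_i}}\frac{c_{i-1}}{\sqrt N\theta_Nr_{i-1}}$, and let $L_2=0$, $L_i=\xi_i+\gamma_iL_{i-1}$. Then there exists $C>0$ such that for all $N$ and all $3\le i\le N$, \[ \Big|\gamma_i\frac{\mathbf E L_{i-1}^2}{\alpha}-\delta_i\Big|<\frac{C}{N^2(r_i-1)^4}. \]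
   Context: For $d>0$, $\chi^2(d)$ has density $\frac{1}{2^{d/2}\Gamma(d/2)}x^{d/2-1}e^{-x/2}\mathbf 1_{x>0}$. *)

theory Defs
  imports "HOL-Probability.Probability"
begin

definition chi2_density :: "real \<Rightarrow> real \<Rightarrow> real" where
  "chi2_density d x = (if x > 0 then x powr (d/2 - 1) * exp (-x/2) / (2 powr (d/2) * Gamma (d/2)) else 0)"

definition theta :: "(nat \<Rightarrow> real) \<Rightarrow> nat \<Rightarrow> real" where
  "theta w N = 1 + real N powr (-2/3) * w N"

definition rr :: "real \<Rightarrow> nat \<Rightarrow> nat \<Rightarrow> real" where
  "rr th N i = 1 + sqrt (1 - (real i - 1) / (real N * th\<^sup>2))"

definition mm :: "real \<Rightarrow> nat \<Rightarrow> nat \<Rightarrow> real" where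
  "mm th N i = 1 - sqrt (1 - (real i - 1) / (real N * th\<^sup>2))"

definition gam :: "real \<Rightarrow> nat \<Rightarrow> nat \<Rightarrow> real" where
  "gam th N i = mm th N i / rr th N i"

definition dlt :: "real \<Rightarrow> nat \<Rightarrow> nat \<Rightarrow> real" where
  "dlt th N i = mm th N i / rr th N i - mm th N i / rr th N (i - 1)"

definition cc :: "('a \<Rightarrow> real) \<Rightarrow> nat \<Rightarrow> 'a \<Rightarrow> real" where
  "cc bi i \<omega> = ((bi \<omega>)\<^sup>2 - real i) / sqrt (real i)"

definition xi :: "(nat \<Rightarrow> 'a \<Rightarrow> real) \<Rightarrow> (nat \<Rightarrow> 'a \<Rightarrow> real) \<Rightarrow> real \<Rightarrow> nat \<Rightarrow> nat \<Rightarrow> 'a \<Rightarrow> real" where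
  "xi a b th N i \<omega> = a i \<omega> / (sqrt (real N) * th * rr th N i)
     + sqrt (mm th N i / rr th N i) * cc (b (i - 1)) (i - 1) \<omega> / (sqrt (real N) * th * rr th N (i - 1))"

primrec LL :: "(nat \<Rightarrow> 'a \<Rightarrow> real) \<Rightarrow> (nat \<Rightarrow> 'a \<Rightarrow> real) \<Rightarrow> real \<Rightarrow> nat \<Rightarrow> nat \<Rightarrow> 'a \<Rightarrow> real" where
  "LL a b th N 0 \<omega> = 0"
| "LL a b th N (Suc k) \<omega> = (if Suc k \<le> 2 then 0
      else xi a b th N (Suc k) \<omega> + gam th N (Suc k) * LL a b th N k \<omega>)"

end

theory Submission
  imports Defs
begin

text \<open>
  Put \<open>t = 1 / (N \<theta>\<^sup>2)\<close> and \<open>s_j = r_j - 1 = sqrt (1 - (j - 1) t)\<close>, so that \<open>s_j\<^sup>2 = s_(j+1)\<^sup>2 + t\<close>.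
  The innovation \<open>\<xi>_j\<close> is centred and independent of \<open>L_(j-1)\<close>, which only depends on earlier
  entries; as \<open>a_i\<close> and \<open>c_i\<close> both have variance \<open>\<alpha>\<close>, \<open>V_j = E L_j\<^sup>2 / \<alpha>\<close> obeys the deterministic
  recursion \<open>V_2 = 0\<close>, \<open>V_j = \<gamma>_j\<^sup>2 V_(j-1) + t (1 / r_j\<^sup>2 + \<gamma>_j / r_(j-1)\<^sup>2)\<close>.
  Its approximate fixed point is \<open>W_j = 1 - r_(j+1) / r_j\<close>: the terms of first order in \<open>t\<close> cancel
  exactly, so the defect \<open>D_j = V_j - W_j\<close> satisfies \<open>D_j = \<gamma>_j\<^sup>2 D_(j-1) + O(t\<^sup>2 / s_j\<^sup>3)\<close>, and because
  \<open>\<gamma>_j\<^sup>2 + s_j \<le> 1\<close> these errors add up to \<open>O(t\<^sup>2 / s_(j+1)\<^sup>4)\<close> only. The initial defect \<open>W_2 = O(t)\<close>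
  is damped by the factor \<open>\<gamma>_3 = O(t)\<close>. Since \<open>\<delta>_i = \<gamma>_i W_(i-1)\<close> and \<open>t \<le> 1 / N\<close>, the claim
  follows with \<open>C = 9\<close>.
\<close>

lemma nn_integral_powr_exp_half:
  fixes z :: real
  assumes "0 < z"
  shows "(\<integral>\<^sup>+x. ennreal (if 0 < x then x powr (z - 1) * exp (- x / 2) else 0) \<partial>lborel)
           = ennreal (2 powr z * Gamma z)"
proof -
  define F where "F x = ennreal (if 0 < x then x powr (z - 1) * exp (- x / 2) else 0)" for x :: real
  have "F \<in> borel_measurable borel"
    unfolding F_def by measurable
  then have "(\<integral>\<^sup>+x. F x \<partial>lborel) = ennreal \<bar>2\<bar> * (\<integral>\<^sup>+x. F (0 + 2 * x) \<partial>lborel)"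
    by (rule nn_integral_real_affine) simp
  also have "(\<lambda>x. F (0 + 2 * x))
      = (\<lambda>x. ennreal (2 powr (z - 1)) * (ennreal (x powr (z - 1) / exp x) * indicator {0..} x))"
    by (auto simp: F_def indicator_def powr_mult exp_minus field_simps ennreal_mult'[symmetric])
  also have "(\<integral>\<^sup>+x. ennreal (2 powr (z - 1)) * (ennreal (x powr (z - 1) / exp x) * indicator {0..} x) \<partial>lborel)
      = ennreal (2 powr (z - 1)) * ennreal (Gamma z)"
  proof -
    have "(\<integral>\<^sup>+x. ennreal (x powr (z - 1) / exp x) * indicator {0..} x \<partial>lborel) = ennreal (Gamma z)"
      by (rule nn_integral_has_integral_lebesgue'[OF _ Gamma_integral_real[OF assms]]) simp
    then show ?thesis
      by (simp add: nn_integral_cmult)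
  qed
  also have "ennreal \<bar>2\<bar> * (ennreal (2 powr (z - 1)) * ennreal (Gamma z)) = ennreal (2 powr z * Gamma z)"
  proof -
    have "2 * (2 powr (z - 1) * Gamma z) = 2 powr z * Gamma z"
      by (simp add: powr_diff)
    moreover have "0 \<le> Gamma z"
      using assms by (simp add: less_imp_le)
    ultimately show ?thesis
      by (metis abs_numeral ennreal_mult ennreal_numeral mult_nonneg_nonneg powr_ge_zero zero_le_numeral)
  qed
  finally show ?thesis
    by (simp add: F_def)
qed

lemma chi2_density_moment:
  fixes d :: real
  assumes "0 < d"
  shows "has_bochner_integral lborel (\<lambda>x. chi2_density d x * x ^ n)
           (2 ^ n * Gamma (d / 2 + n) / Gamma (d / 2))"
proof -
  define z where "z = d / 2 + n"
  have "0 < z"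
    using assms by (simp add: z_def)
  define g where "g x = (if 0 < x then x powr (z - 1) * exp (- x / 2) else 0)" for x :: real
  have "g \<in> borel_measurable lborel"
    unfolding g_def by measurable
  then have "has_bochner_integral lborel g (2 powr z * Gamma z)"
    using nn_integral_powr_exp_half[OF \<open>0 < z\<close>] \<open>0 < z\<close>
    by (intro has_bochner_integral_nn_integral) (auto simp: g_def)
  then have "has_bochner_integral lborel (\<lambda>x. g x / (2 powr (d / 2) * Gamma (d / 2)))
               (2 powr z * Gamma z / (2 powr (d / 2) * Gamma (d / 2)))"
    by (rule has_bochner_integral_divide_zero)
  moreover have "chi2_density d x * x ^ n = g x / (2 powr (d / 2) * Gamma (d / 2))" for x
  proof (cases "0 < x")
    case True
    then have "x powr (d / 2 - 1) * x ^ n = x powr (z - 1)"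
      by (simp add: z_def powr_realpow[symmetric] powr_add[symmetric] algebra_simps)
    with True show ?thesis
      by (simp add: chi2_density_def g_def field_simps)
  qed (simp add: chi2_density_def g_def)
  moreover have "2 powr z * Gamma z / (2 powr (d / 2) * Gamma (d / 2))
                   = 2 ^ n * Gamma (d / 2 + n) / Gamma (d / 2)"
    using assms by (simp add: z_def powr_add powr_realpow)
  ultimately show ?thesis
    by simp
qed

lemma (in prob_space) chi2_distributed_moments:
  assumes "0 < d" and D: "distributed M lborel Y (\<lambda>x. ennreal (chi2_density d x))"
  shows "integrable M Y" "expectation Y = d"
    and "integrable M (\<lambda>\<omega>. (Y \<omega>)\<^sup>2)" "expectation (\<lambda>\<omega>. (Y \<omega>)\<^sup>2) = d * (d + 2)"
proof -
  have moment: "integrable M (\<lambda>\<omega>. Y \<omega> ^ n) \<and>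
      expectation (\<lambda>\<omega>. Y \<omega> ^ n) = 2 ^ n * Gamma (d / 2 + n) / Gamma (d / 2)" for n
  proof -
    have "\<And>x. 0 \<le> chi2_density d x"
      using assms by (simp add: chi2_density_def)
    then show ?thesis
      using distributed_integrable[OF D, of "\<lambda>x. x ^ n"] distributed_integral[OF D, of "\<lambda>x. x ^ n"]
        chi2_density_moment[OF \<open>0 < d\<close>, of n]
      by (auto simp: has_bochner_integral_iff)
  qed
  have "0 < d / 2"
    using assms by simp
  then have "d / 2 \<notin> \<int>\<^sub>\<le>\<^sub>0" "d / 2 + 1 \<notin> \<int>\<^sub>\<le>\<^sub>0"
    by (auto simp: nonpos_Ints_nonpos)
  then have Gamma1: "Gamma (d / 2 + 1) = d / 2 * Gamma (d / 2)"
    and Gamma2: "Gamma (d / 2 + 2) = (d / 2 + 1) * (d / 2) * Gamma (d / 2)"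
    using Gamma_plus1[of "d / 2"] Gamma_plus1[of "d / 2 + 1"] by (simp_all add: add.assoc)
  moreover have "0 < Gamma (d / 2)"
    using \<open>0 < d / 2\<close> by simp
  ultimately have "2 * Gamma (d / 2 + 1) / Gamma (d / 2) = d"
    and "2\<^sup>2 * Gamma (d / 2 + 2) / Gamma (d / 2) = d * (d + 2)"
    by (simp_all add: field_simps)
  with moment[of 1] moment[of 2]
  show "integrable M Y" "expectation Y = d"
    and "integrable M (\<lambda>\<omega>. (Y \<omega>)\<^sup>2)" "expectation (\<lambda>\<omega>. (Y \<omega>)\<^sup>2) = d * (d + 2)"
    by simp_all
qed

lemma (in prob_space) normal_distributed_moments:
  assumes "0 < \<sigma>" and D: "distributed M lborel X (\<lambda>x. ennreal (normal_density 0 \<sigma> x))"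
  shows "integrable M X" "expectation X = 0"
    and "integrable M (\<lambda>\<omega>. (X \<omega>)\<^sup>2)" "expectation (\<lambda>\<omega>. (X \<omega>)\<^sup>2) = \<sigma>\<^sup>2"
proof -
  have D': "distributed M lborel X (normal_density 0 \<sigma>)"
    using D by simp
  show "integrable M X"
    using distributed_integrable[OF D, of "\<lambda>x. x"] integrable_normal_moment_nz_1[OF assms(1)] by simp
  show "expectation X = 0"
    using normal_distributed_expectation[OF assms(1) D'] .
  show "integrable M (\<lambda>\<omega>. (X \<omega>)\<^sup>2)"
    using distributed_integrable[OF D, of "\<lambda>x. x\<^sup>2"] integrable_normal_moment[OF assms(1), of 0 2] by simp
  show "expectation (\<lambda>\<omega>. (X \<omega>)\<^sup>2) = \<sigma>\<^sup>2"
    using normal_distributed_variance[OF assms(1) D'] normal_distributed_expectation[OF assms(1) D']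
    by simp
qed

lemma (in prob_space) cc_moments:
  assumes "0 < \<alpha>" "0 < k"
    and D: "distributed M lborel (\<lambda>\<omega>. (2 / \<alpha>) * (B \<omega>)\<^sup>2)
              (\<lambda>x. ennreal (chi2_density (2 * real k / \<alpha>) x))"
  shows "integrable M (cc B k)" "expectation (cc B k) = 0"
    and "integrable M (\<lambda>\<omega>. (cc B k \<omega>)\<^sup>2)" "expectation (\<lambda>\<omega>. (cc B k \<omega>)\<^sup>2) = \<alpha>"
proof -
  define Y where "Y \<omega> = (2 / \<alpha>) * (B \<omega>)\<^sup>2" for \<omega>
  have "0 < 2 * real k / \<alpha>"
    using assms by simp
  note Y = chi2_distributed_moments[OF this D[folded Y_def]]
  have c: "cc B k = (\<lambda>\<omega>. (\<alpha> / 2 * Y \<omega> - k) / sqrt k)"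
    using assms by (auto simp: cc_def Y_def)
  have c2: "(\<lambda>\<omega>. (cc B k \<omega>)\<^sup>2) = (\<lambda>\<omega>. ((\<alpha> / 2)\<^sup>2 * (Y \<omega>)\<^sup>2 - \<alpha> * k * Y \<omega> + k\<^sup>2) / k)"
    unfolding c by (auto simp: power2_diff field_simps power2_eq_square)
  show "integrable M (cc B k)" "expectation (cc B k) = 0"
    unfolding c using Y assms by (simp_all add: prob_space)
  show "integrable M (\<lambda>\<omega>. (cc B k \<omega>)\<^sup>2)" "expectation (\<lambda>\<omega>. (cc B k \<omega>)\<^sup>2) = \<alpha>"
    unfolding c2 using Y assms by (simp_all add: prob_space power2_eq_square field_simps)
qed

lemma abs_inverse_diff_le:
  fixes u v p q d :: real
  assumes "0 < p" "p \<le> u" "0 < q" "q \<le> v" "\<bar>u - v\<bar> \<le> d"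
  shows "\<bar>1 / u - 1 / v\<bar> \<le> d / (p * q)"
proof -
  have "\<bar>1 / u - 1 / v\<bar> = \<bar>u - v\<bar> / (u * v)"
    using assms by (simp add: field_simps abs_minus_commute)
  also have "\<dots> \<le> d / (p * q)"
    using assms by (intro frac_le mult_mono) auto
  finally show ?thesis .
qed

lemma one_minus_ratio_eq:
  fixes x y :: real
  assumes "0 \<le> x" "0 < x + y"
  shows "1 - (1 + y) / (1 + x) = (x\<^sup>2 - y\<^sup>2) / ((x + y) * (1 + x))"
proof -
  have "1 + x \<noteq> 0" "x + y \<noteq> 0"
    using assms by auto
  then have "1 - (1 + y) / (1 + x) = (x - y) / (1 + x)"
    by (simp add: field_simps)
  also have "\<dots> = (x - y) * (x + y) / ((x + y) * (1 + x))"
    using \<open>x + y \<noteq> 0\<close> by simp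
  also have "(x - y) * (x + y) = x\<^sup>2 - y\<^sup>2"
    by (simp add: algebra_simps power2_eq_square)
  finally show ?thesis .
qed

lemma first_order_cancellation:
  fixes s :: real
  assumes "0 < s"
  shows "((1 - s) / (1 + s))\<^sup>2 / (2 * s * (1 + s)) + (1 + (1 - s) / (1 + s)) / (1 + s)\<^sup>2
           = 1 / (2 * s * (1 + s))"
proof -
  define u where "u = 1 + s"
  have "u \<noteq> 0" "s \<noteq> 0"
    using assms by (auto simp: u_def)
  then have "((1 - s) / u)\<^sup>2 / (2 * s * u) + (1 + (1 - s) / u) / u\<^sup>2
      = ((1 - s)\<^sup>2 + 2 * s * (u + 1 - s)) / (2 * s * u ^ 3)"
    by (simp add: field_simps power2_eq_square power3_eq_cube)
  also have "(1 - s)\<^sup>2 + 2 * s * (u + 1 - s) = u\<^sup>2"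
    by (simp add: u_def algebra_simps power2_eq_square)
  finally show ?thesis
    using \<open>u \<noteq> 0\<close> by (simp add: u_def[symmetric] power2_eq_square power3_eq_cube)
qed

lemma square_gap:
  fixes x y t :: real
  assumes "0 < y" "0 \<le> x" "x\<^sup>2 = y\<^sup>2 + t" "0 < t"
  shows "y < x" "x - y = t / (x + y)"
proof -
  show "y < x"
    using assms by (smt (verit) power_mono)
  moreover have "(x - y) * (x + y) = t"
    using assms by (simp add: algebra_simps power2_eq_square)
  ultimately show "x - y = t / (x + y)"
    using assms by (simp add: eq_divide_eq)
qed

lemma inverse_diff_bound_upper:
  fixes a s t :: real
  assumes "0 < s" "s < a" "a \<le> 1" "a - s \<le> t / (2 * s)"
  shows "\<bar>1 / ((a + s) * (1 + a)) - 1 / (2 * s * (1 + s))\<bar> \<le> t / (2 * s ^ 3)"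
proof -
  have "a + s \<le> (a + s) * (1 + a)"
    using mult_left_mono[of 1 "1 + a" "a + s"] assms by simp
  then have "2 * s \<le> (a + s) * (1 + a)"
    using assms by linarith
  moreover have "(a + s) * (1 + a) - 2 * s * (1 + s) = (a - s) * (1 + a + 2 * s)"
    by (simp add: algebra_simps)
  moreover have "(a - s) * (1 + a + 2 * s) \<le> t / (2 * s) * 4"
    using assms by (intro mult_mono) auto
  ultimately have "\<bar>1 / ((a + s) * (1 + a)) - 1 / (2 * s * (1 + s))\<bar> \<le> (2 * t / s) / (2 * s * (2 * s))"
    using assms by (intro abs_inverse_diff_le) auto
  then show ?thesis
    using assms by (simp add: field_simps power3_eq_cube)
qed

lemma inverse_diff_bound_square:
  fixes a s t :: real
  assumes "0 < s" "s \<le> 1" "s < a" "a \<le> 1" "a - s \<le> t / (2 * s)"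
  shows "\<bar>1 / (1 + a)\<^sup>2 - 1 / (1 + s)\<^sup>2\<bar> \<le> 2 * t / s ^ 3"
proof -
  have "s \<le> (1 + x)\<^sup>2" if "0 \<le> x" for x :: real
    using \<open>s \<le> 1\<close> one_le_power[of "1 + x" 2] that by linarith
  moreover have "(1 + a)\<^sup>2 - (1 + s)\<^sup>2 = (a - s) * (2 + a + s)"
    by (simp add: algebra_simps power2_eq_square)
  moreover have "(a - s) * (2 + a + s) \<le> t / (2 * s) * 4"
    using assms by (intro mult_mono) auto
  ultimately have "\<bar>1 / (1 + a)\<^sup>2 - 1 / (1 + s)\<^sup>2\<bar> \<le> (2 * t / s) / (s * s)"
    using assms by (intro abs_inverse_diff_le) auto
  then show ?thesis
    using assms by (simp add: field_simps power3_eq_cube)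
qed

lemma inverse_diff_bound_lower:
  fixes b s t :: real
  assumes "0 < b" "b < s" "s \<le> 1" "s - b \<le> t / s"
  shows "\<bar>1 / ((s + b) * (1 + s)) - 1 / (2 * s * (1 + s))\<bar> \<le> t / s ^ 3"
proof -
  have "s * 1 \<le> (s + b) * (1 + s)"
    using assms by (intro mult_mono) auto
  moreover have "2 * s * (1 + s) - (s + b) * (1 + s) = (s - b) * (1 + s)"
    by (simp add: algebra_simps)
  moreover have "(s - b) * (1 + s) \<le> t / s * 2"
    using assms by (intro mult_mono) auto
  ultimately have "\<bar>1 / ((s + b) * (1 + s)) - 1 / (2 * s * (1 + s))\<bar> \<le> (t / s * 2) / (s * (2 * s))"
    using assms by (intro abs_inverse_diff_le) auto
  then show ?thesis
    using assms by (simp add: field_simps power3_eq_cube)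
qed

lemma step_defect_expansion:
  fixes a s b t :: real
  assumes "0 < s" "0 \<le> a" "0 < b" and a_sq: "a\<^sup>2 = s\<^sup>2 + t" and b_sq: "b\<^sup>2 = s\<^sup>2 - t"
  defines "g \<equiv> (1 - s) / (1 + s)"
  shows "g\<^sup>2 * (1 - (1 + s) / (1 + a)) + t * (1 / (1 + s)\<^sup>2 + g / (1 + a)\<^sup>2) - (1 - (1 + b) / (1 + s))
           = t * (g\<^sup>2 * (1 / ((a + s) * (1 + a)) - 1 / (2 * s * (1 + s)))
                  + g * (1 / (1 + a)\<^sup>2 - 1 / (1 + s)\<^sup>2)
                  - (1 / ((s + b) * (1 + s)) - 1 / (2 * s * (1 + s))))"
proof -
  have Wa: "1 - (1 + s) / (1 + a) = t / ((a + s) * (1 + a))"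
    and Wb: "1 - (1 + b) / (1 + s) = t / ((s + b) * (1 + s))"
    using one_minus_ratio_eq[of a s] one_minus_ratio_eq[of s b] a_sq b_sq assms by simp_all
  have "g\<^sup>2 * (1 - (1 + s) / (1 + a)) + t * (1 / (1 + s)\<^sup>2 + g / (1 + a)\<^sup>2) - (1 - (1 + b) / (1 + s))
      = t * (g\<^sup>2 * (1 / ((a + s) * (1 + a)) - 1 / (2 * s * (1 + s)))
             + g * (1 / (1 + a)\<^sup>2 - 1 / (1 + s)\<^sup>2)
             - (1 / ((s + b) * (1 + s)) - 1 / (2 * s * (1 + s))))
        + t * (g\<^sup>2 / (2 * s * (1 + s)) + (1 + g) / (1 + s)\<^sup>2 - 1 / (2 * s * (1 + s)))"
    unfolding Wa Wb by (simp add: divide_inverse algebra_simps)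
  also have "g\<^sup>2 / (2 * s * (1 + s)) + (1 + g) / (1 + s)\<^sup>2 - 1 / (2 * s * (1 + s)) = 0"
    using first_order_cancellation[OF \<open>0 < s\<close>] by (simp add: g_def)
  finally show ?thesis
    by simp
qed

lemma step_defect_bound:
  fixes a s b t :: real
  assumes "0 < t" "0 < s" "s \<le> 1" "0 < b" "0 \<le> a" "a \<le> 1"
    and a_sq: "a\<^sup>2 = s\<^sup>2 + t" and b_sq: "b\<^sup>2 = s\<^sup>2 - t"
  defines "g \<equiv> (1 - s) / (1 + s)"
  shows "\<bar>g\<^sup>2 * (1 - (1 + s) / (1 + a)) + t * (1 / (1 + s)\<^sup>2 + g / (1 + a)\<^sup>2) - (1 - (1 + b) / (1 + s))\<bar>
           \<le> 4 * t\<^sup>2 / s ^ 3"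
proof -
  have "s\<^sup>2 = b\<^sup>2 + t"
    using b_sq by simp
  note a = square_gap[OF \<open>0 < s\<close> \<open>0 \<le> a\<close> a_sq \<open>0 < t\<close>]
    and b = square_gap[OF \<open>0 < b\<close> less_imp_le[OF \<open>0 < s\<close>] this \<open>0 < t\<close>]
  have gaps: "a - s \<le> t / (2 * s)" "s - b \<le> t / s"
    unfolding a(2) b(2) using a(1) b(1) assms by (intro frac_le; simp)+
  define X1 where "X1 = 1 / ((a + s) * (1 + a)) - 1 / (2 * s * (1 + s))"
  define X2 where "X2 = 1 / (1 + a)\<^sup>2 - 1 / (1 + s)\<^sup>2"
  define X3 where "X3 = 1 / ((s + b) * (1 + s)) - 1 / (2 * s * (1 + s))"
  have X: "\<bar>X1\<bar> \<le> t / (2 * s ^ 3)" "\<bar>X2\<bar> \<le> 2 * t / s ^ 3" "\<bar>X3\<bar> \<le> t / s ^ 3"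
    unfolding X1_def X2_def X3_def using a(1) b(1) gaps assms
    by (simp_all add: inverse_diff_bound_upper inverse_diff_bound_square inverse_diff_bound_lower)
  have "0 \<le> g" "g \<le> 1"
    using assms by (simp_all add: g_def)
  then have "\<bar>g\<^sup>2 * X1\<bar> \<le> \<bar>X1\<bar>" "\<bar>g * X2\<bar> \<le> \<bar>X2\<bar>"
    by (simp_all add: abs_mult mult_left_le_one_le power_le_one)
  then have "\<bar>g\<^sup>2 * X1 + g * X2 - X3\<bar> \<le> t / (2 * s ^ 3) + 2 * t / s ^ 3 + t / s ^ 3"
    using X abs_triangle_ineq[of "g\<^sup>2 * X1" "g * X2"] abs_triangle_ineq4[of "g\<^sup>2 * X1 + g * X2" X3]
    by linarith
  also have "\<dots> \<le> 4 * t / s ^ 3"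
    using assms by (simp add: field_simps)
  finally have X_sum: "\<bar>g\<^sup>2 * X1 + g * X2 - X3\<bar> \<le> 4 * t / s ^ 3" .
  have "\<bar>g\<^sup>2 * (1 - (1 + s) / (1 + a)) + t * (1 / (1 + s)\<^sup>2 + g / (1 + a)\<^sup>2) - (1 - (1 + b) / (1 + s))\<bar>
      = t * \<bar>g\<^sup>2 * X1 + g * X2 - X3\<bar>"
    unfolding step_defect_expansion[OF \<open>0 < s\<close> \<open>0 \<le> a\<close> \<open>0 < b\<close> a_sq b_sq, folded g_def] X1_def X2_def X3_def
    using \<open>0 < t\<close> by (simp add: abs_mult)
  also have "\<dots> \<le> t * (4 * t / s ^ 3)"
    using X_sum \<open>0 < t\<close> by (simp only: mult_le_cancel_left_pos)
  also have "\<dots> = 4 * t\<^sup>2 / s ^ 3"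
    by (simp add: power2_eq_square)
  finally show ?thesis .
qed

lemma contraction_sq_add_le_1:
  fixes x :: real
  assumes "0 \<le> x" "x \<le> 1"
  shows "((1 - x) / (1 + x))\<^sup>2 + x \<le> 1"
proof -
  have "(1 + x)\<^sup>2 - ((1 - x)\<^sup>2 + x * (1 + x)\<^sup>2) = x * (1 - x) * (3 + x)"
    by (simp add: algebra_simps power2_eq_square)
  also have "\<dots> \<ge> 0"
    using assms by simp
  finally have "(1 - x)\<^sup>2 + x * (1 + x)\<^sup>2 \<le> (1 + x)\<^sup>2"
    by simp
  with assms show ?thesis
    by (simp add: field_simps)
qed

lemma linear_recursion_abs_bound:
  fixes D c e B :: "nat \<Rightarrow> real"
  assumes "m \<le> n"
    and step: "\<And>k. m < k \<Longrightarrow> k \<le> n \<Longrightarrow> \<bar>D k - c k * D (k - 1)\<bar> \<le> e k"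
    and c_nonneg: "\<And>k. m < k \<Longrightarrow> k \<le> n \<Longrightarrow> 0 \<le> c k"
    and B_step: "\<And>k. m < k \<Longrightarrow> k \<le> n \<Longrightarrow> c k * B (k - 1) + e k \<le> B k"
    and "0 \<le> B m"
  shows "\<bar>D n\<bar> \<le> B n + (\<Prod>k\<in>{Suc m..n}. c k) * \<bar>D m\<bar>"
proof -
  have "\<bar>D j\<bar> \<le> B j + (\<Prod>k\<in>{Suc m..j}. c k) * \<bar>D m\<bar>" if "m \<le> j" "j \<le> n" for j
    using that
  proof (induction j rule: dec_induct)
    case base
    then show ?case
      using \<open>0 \<le> B m\<close> by simp
  next
    case (step j)
    have "\<bar>D (Suc j)\<bar> \<le> \<bar>D (Suc j) - c (Suc j) * D j\<bar> + \<bar>c (Suc j) * D j\<bar>"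
      by (metis abs_triangle_ineq diff_add_cancel)
    also have "\<dots> \<le> c (Suc j) * \<bar>D j\<bar> + e (Suc j)"
      using assms(2)[of "Suc j"] c_nonneg[of "Suc j"] step.hyps step.prems by (simp add: abs_mult)
    also have "\<dots> \<le> c (Suc j) * (B j + (\<Prod>k\<in>{Suc m..j}. c k) * \<bar>D m\<bar>) + e (Suc j)"
      using step c_nonneg[of "Suc j"] by (intro add_right_mono mult_left_mono) auto
    also have "\<dots> \<le> B (Suc j) + (\<Prod>k\<in>{Suc m..Suc j}. c k) * \<bar>D m\<bar>"
      using B_step[of "Suc j"] step.hyps step.prems by (simp add: algebra_simps)
    finally show ?case .
  qed
  with \<open>m \<le> n\<close> show ?thesis
    by simp
qed

locale sqrt_profile =
  fixes t :: real and n :: nat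
  assumes t_pos: "0 < t" and n_ge_3: "3 \<le> n" and n_t_le_1: "real n * t \<le> 1"
begin

definition s :: "nat \<Rightarrow> real" where
  "s j = sqrt (1 - (real j - 1) * t)"

definition g :: "nat \<Rightarrow> real" where
  "g j = (1 - s j) / (1 + s j)"

definition W :: "nat \<Rightarrow> real" where
  "W j = 1 - (1 + s (Suc j)) / (1 + s j)"

lemma t_le_one_third: "t \<le> 1 / 3"
proof -
  have "3 * t \<le> real n * t"
    using n_ge_3 t_pos by (intro mult_right_mono) auto
  with n_t_le_1 show ?thesis
    by simp
qed

lemma radicand_pos:
  assumes "j \<le> n"
  shows "0 < 1 - (real j - 1) * t"
proof -
  have "real j * t \<le> real n * t"
    using assms t_pos by (intro mult_right_mono) auto
  moreover have "1 - (real j - 1) * t = 1 - real j * t + t"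
    by (simp add: algebra_simps)
  ultimately show ?thesis
    using n_t_le_1 t_pos by linarith
qed

lemma s_pos: "j \<le> n \<Longrightarrow> 0 < s j"
  unfolding s_def using radicand_pos[of j] by simp

lemma s_sq: "j \<le> n \<Longrightarrow> (s j)\<^sup>2 = 1 - (real j - 1) * t"
  unfolding s_def using radicand_pos[of j] by (intro real_sqrt_pow2) simp

lemma s_le_1: "1 \<le> j \<Longrightarrow> s j \<le> 1"
  using t_pos by (simp add: s_def)

lemma s_sq_step:
  assumes "Suc j \<le> n"
  shows "(s j)\<^sup>2 = (s (Suc j))\<^sup>2 + t"
proof -
  have "(s j)\<^sup>2 = 1 - real j * t + t" "(s (Suc j))\<^sup>2 = 1 - real j * t"
    using assms s_sq[of j] s_sq[of "Suc j"] by (simp_all add: left_diff_distrib)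
  then show ?thesis
    by simp
qed

lemma s_Suc_less:
  assumes "Suc j \<le> n"
  shows "s (Suc j) < s j"
proof (rule power_less_imp_less_base)
  show "(s (Suc j))\<^sup>2 < (s j)\<^sup>2"
    using s_sq_step[OF assms] t_pos by simp
  show "0 \<le> s j"
    using s_pos[of j] assms by simp
qed

lemma g_nonneg: "1 \<le> j \<Longrightarrow> j \<le> n \<Longrightarrow> 0 \<le> g j"
  using s_pos[of j] s_le_1[of j] by (simp add: g_def)

lemma g_le_1: "j \<le> n \<Longrightarrow> g j \<le> 1"
  using s_pos[of j] by (simp add: g_def)

lemma g_3_le: "g 3 \<le> 2 * t"
proof -
  have "0 < s 3" "s 3 \<le> 1" "(s 3)\<^sup>2 = 1 - 2 * t"
    using n_ge_3 s_pos[of 3] s_le_1[of 3] s_sq[of 3] by simp_all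
  then have "g 3 \<le> (1 - s 3) / 1" "(s 3) * (s 3) \<le> 1 * s 3"
    unfolding g_def by (intro divide_left_mono mult_right_mono; simp)+
  with \<open>(s 3)\<^sup>2 = 1 - 2 * t\<close> show ?thesis
    by (simp add: power2_eq_square)
qed

lemma W_eq: "Suc j \<le> n \<Longrightarrow> W j = t / ((s j + s (Suc j)) * (1 + s j))"
  using one_minus_ratio_eq[of "s j" "s (Suc j)"] s_sq_step[of j] s_pos[of j] s_pos[of "Suc j"]
  by (simp add: W_def)

lemma W_2_bounds: "0 \<le> W 2" "W 2 \<le> 2 * t"
proof -
  have "0 < s 2" "0 < s 3" "s 2 \<le> 1"
    using n_ge_3 s_pos[of 2] s_pos[of 3] s_le_1[of 2] by simp_all
  have "1 / 2 \<le> 1 - t"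
    using t_le_one_third by simp
  also have "1 - t = s 2 * s 2"
    using n_ge_3 s_sq[of 2] by (simp add: power2_eq_square)
  also have "\<dots> \<le> (s 2 + s 3) * (1 + s 2)"
    using \<open>0 < s 2\<close> \<open>0 < s 3\<close> \<open>s 2 \<le> 1\<close> by (intro mult_mono) auto
  finally have "1 / 2 \<le> (s 2 + s 3) * (1 + s 2)" .
  moreover have "W 2 = t / ((s 2 + s 3) * (1 + s 2))"
    using n_ge_3 W_eq[of 2] by (simp add: numeral_3_eq_3)
  ultimately show "0 \<le> W 2" "W 2 \<le> 2 * t"
    using t_pos \<open>0 < s 2\<close> \<open>0 < s 3\<close> by (simp_all add: divide_le_eq)
qed

lemma g_mult_prod_le:
  assumes "3 \<le> i" "i \<le> n"
  shows "g i * (\<Prod>k\<in>{3..i - 1}. (g k)\<^sup>2) \<le> 2 * t"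
proof (cases "i = 3")
  case True
  then show ?thesis
    using g_3_le by simp
next
  case False
  have g01: "0 \<le> g k \<and> g k \<le> 1" if "k \<in> {3..i - 1}" for k
    using that assms g_nonneg[of k] g_le_1[of k] by auto
  have "(\<Prod>k\<in>{3..i - 1}. (g k)\<^sup>2) = (g 3)\<^sup>2 * (\<Prod>k\<in>{3..i - 1} - {3}. (g k)\<^sup>2)"
    using False assms by (intro prod.remove) auto
  also have "\<dots> \<le> g 3 * 1"
    using g01 False assms
    by (intro mult_mono prod_le_1) (auto simp: power2_eq_square mult_le_one intro: mult_left_le_one_le prod_nonneg)
  finally have "g i * (\<Prod>k\<in>{3..i - 1}. (g k)\<^sup>2) \<le> 1 * g 3"
    using assms g_nonneg[of i] g_le_1[of i] by (intro mult_mono) (auto intro: prod_nonneg)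
  with g_3_le show ?thesis
    by simp
qed

lemma defect_recursion_error:
  assumes "2 \<le> k" "Suc k \<le> n"
    and V_rec: "V k = (g k)\<^sup>2 * V (k - 1) + t * (1 / (1 + s k)\<^sup>2 + g k / (1 + s (k - 1))\<^sup>2)"
  shows "\<bar>(V k - W k) - (g k)\<^sup>2 * (V (k - 1) - W (k - 1))\<bar> \<le> 4 * t\<^sup>2 / s k ^ 3"
proof -
  have k: "Suc (k - 1) = k"
    using assms by simp
  have "(s (k - 1))\<^sup>2 = (s k)\<^sup>2 + t" "(s (Suc k))\<^sup>2 = (s k)\<^sup>2 - t"
    using s_sq_step[of "k - 1"] s_sq_step[of k] assms by (simp_all add: k)
  moreover have "0 < s (k - 1)" "s (k - 1) \<le> 1"
    using s_pos[of "k - 1"] s_le_1[of "k - 1"] assms by simp_all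
  ultimately
  have "\<bar>(g k)\<^sup>2 * W (k - 1) + t * (1 / (1 + s k)\<^sup>2 + g k / (1 + s (k - 1))\<^sup>2) - W k\<bar> \<le> 4 * t\<^sup>2 / s k ^ 3"
    using assms t_pos s_pos[of k] s_le_1[of k] s_pos[of "Suc k"]
    unfolding g_def W_def k by (intro step_defect_bound) auto
  then show ?thesis
    unfolding V_rec by (simp add: algebra_simps)
qed

lemma defect_bound_inductive_step:
  assumes "1 \<le> k" "Suc k \<le> n"
  shows "(g k)\<^sup>2 * (4 * t\<^sup>2 / s k ^ 4) + 4 * t\<^sup>2 / s k ^ 3 \<le> 4 * t\<^sup>2 / s (Suc k) ^ 4"
proof -
  have "0 < s k" "s k \<le> 1" "0 < s (Suc k)" "s (Suc k) < s k"
    using assms s_pos[of k] s_le_1[of k] s_pos[of "Suc k"] s_Suc_less[of k] by simp_all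
  have "(g k)\<^sup>2 * (4 * t\<^sup>2 / s k ^ 4) + 4 * t\<^sup>2 / s k ^ 3 = 4 * t\<^sup>2 / s k ^ 4 * ((g k)\<^sup>2 + s k)"
    using \<open>0 < s k\<close> by (simp add: field_simps power_eq_if)
  also have "\<dots> \<le> 4 * t\<^sup>2 / s k ^ 4"
    using contraction_sq_add_le_1[of "s k"] \<open>0 < s k\<close> \<open>s k \<le> 1\<close> by (intro mult_left_le) (simp_all add: g_def)
  also have "\<dots> \<le> 4 * t\<^sup>2 / s (Suc k) ^ 4"
    using \<open>0 < s (Suc k)\<close> \<open>s (Suc k) < s k\<close>
    by (intro divide_left_mono mult_pos_pos power_mono zero_less_power) auto
  finally show ?thesis .
qed

lemma defect_abs_bound:
  assumes V_rec: "\<And>j. 3 \<le> j \<Longrightarrow> j \<le> n \<Longrightarrow>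
          V j = (g j)\<^sup>2 * V (j - 1) + t * (1 / (1 + s j)\<^sup>2 + g j / (1 + s (j - 1))\<^sup>2)"
    and "2 \<le> j" "Suc j \<le> n"
  shows "\<bar>V j - W j\<bar> \<le> 4 * t\<^sup>2 / s (Suc j) ^ 4 + (\<Prod>k\<in>{3..j}. (g k)\<^sup>2) * \<bar>V 2 - W 2\<bar>"
proof -
  have "\<bar>V j - W j\<bar> \<le> 4 * t\<^sup>2 / s (Suc j) ^ 4 + (\<Prod>k\<in>{Suc 2..j}. (g k)\<^sup>2) * \<bar>V 2 - W 2\<bar>"
  proof (rule linear_recursion_abs_bound[where D = "\<lambda>k. V k - W k" and c = "\<lambda>k. (g k)\<^sup>2"
        and e = "\<lambda>k. 4 * t\<^sup>2 / s k ^ 3" and B = "\<lambda>k. 4 * t\<^sup>2 / s (Suc k) ^ 4"])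
    fix k
    assume k: "2 < k" "k \<le> j"
    then show "\<bar>V k - W k - (g k)\<^sup>2 * (V (k - 1) - W (k - 1))\<bar> \<le> 4 * t\<^sup>2 / s k ^ 3"
      using assms V_rec[of k] by (intro defect_recursion_error) auto
    have "Suc (k - 1) = k"
      using k by simp
    then show "(g k)\<^sup>2 * (4 * t\<^sup>2 / s (Suc (k - 1)) ^ 4) + 4 * t\<^sup>2 / s k ^ 3 \<le> 4 * t\<^sup>2 / s (Suc k) ^ 4"
      using k assms defect_bound_inductive_step[of k] by simp
  qed (use assms in auto)
  then show ?thesis
    by (simp add: numeral_3_eq_3)
qed

lemma variance_defect_bound:
  assumes V_2: "V 2 = 0"
    and V_rec: "\<And>j. 3 \<le> j \<Longrightarrow> j \<le> n \<Longrightarrow>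
          V j = (g j)\<^sup>2 * V (j - 1) + t * (1 / (1 + s j)\<^sup>2 + g j / (1 + s (j - 1))\<^sup>2)"
    and i: "3 \<le> i" "i \<le> n"
  shows "\<bar>g i * V (i - 1) - g i * W (i - 1)\<bar> \<le> 8 * t\<^sup>2 / s i ^ 4"
proof -
  define P where "P = (\<Prod>k\<in>{3..i - 1}. (g k)\<^sup>2)"
  have D: "\<bar>V (i - 1) - W (i - 1)\<bar> \<le> 4 * t\<^sup>2 / s i ^ 4 + P * W 2"
    using defect_abs_bound[OF V_rec, of "i - 1"] i V_2 W_2_bounds by (simp add: P_def)
  have "0 \<le> g i" "g i \<le> 1" "0 < s i" "s i \<le> 1"
    using i g_nonneg[of i] g_le_1[of i] s_pos[of i] s_le_1[of i] by simp_all
  have "\<bar>g i * V (i - 1) - g i * W (i - 1)\<bar> = g i * \<bar>V (i - 1) - W (i - 1)\<bar>"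
    using \<open>0 \<le> g i\<close> by (simp add: abs_mult right_diff_distrib[symmetric])
  also have "\<dots> \<le> g i * (4 * t\<^sup>2 / s i ^ 4 + P * W 2)"
    using D \<open>0 \<le> g i\<close> by (rule mult_left_mono)
  also have "\<dots> = g i * (4 * t\<^sup>2 / s i ^ 4) + g i * P * W 2"
    by (simp add: algebra_simps)
  also have "\<dots> \<le> 1 * (4 * t\<^sup>2 / s i ^ 4) + (2 * t) * (2 * t)"
  proof (rule add_mono)
    show "g i * (4 * t\<^sup>2 / s i ^ 4) \<le> 1 * (4 * t\<^sup>2 / s i ^ 4)"
      using \<open>g i \<le> 1\<close> by (rule mult_right_mono) simp
    show "g i * P * W 2 \<le> 2 * t * (2 * t)"
      by (rule mult_mono) (use g_mult_prod_le[OF i] W_2_bounds t_pos in \<open>simp_all add: P_def\<close>)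
  qed
  also have "\<dots> \<le> 8 * t\<^sup>2 / s i ^ 4"
  proof -
    have "t\<^sup>2 * s i ^ 4 \<le> t\<^sup>2 * 1"
      using \<open>0 < s i\<close> \<open>s i \<le> 1\<close> by (intro mult_left_mono power_le_one) auto
    then have "4 * t\<^sup>2 \<le> 4 * t\<^sup>2 / s i ^ 4"
      using \<open>0 < s i\<close> by (simp add: le_divide_eq)
    then show ?thesis
      by (simp add: power2_eq_square)
  qed
  finally show ?thesis .
qed

end

lemma measurable_PiM_eval_borel:
  "(\<lambda>f. f x) \<in> borel_measurable (PiM A (\<lambda>_. (borel :: real measure)))"
proof (cases "x \<in> A")
  case False
  then have "f x = undefined" if "f \<in> space (PiM A (\<lambda>_. (borel :: real measure)))" for f
    using that by (metis PiE_arb space_PiM)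
  then show ?thesis
    by (subst measurable_cong[where g = "\<lambda>_. undefined"]) auto
qed (rule measurable_component_singleton)

lemma (in prob_space) indep_vars_integral_restrict_mult:
  fixes F G :: "('i \<Rightarrow> real) \<Rightarrow> real"
  assumes ind: "indep_vars (\<lambda>_. borel) X I"
    and AB: "A \<inter> B = {}" "A \<subseteq> I" "B \<subseteq> I"
    and F: "F \<in> borel_measurable (PiM A (\<lambda>_. borel))"
    and G: "G \<in> borel_measurable (PiM B (\<lambda>_. borel))"
    and "integrable M (\<lambda>\<omega>. F (restrict (\<lambda>i. X i \<omega>) A))"
    and "integrable M (\<lambda>\<omega>. G (restrict (\<lambda>i. X i \<omega>) B))"
  shows "integrable M (\<lambda>\<omega>. F (restrict (\<lambda>i. X i \<omega>) A) * G (restrict (\<lambda>i. X i \<omega>) B))"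
    and "expectation (\<lambda>\<omega>. F (restrict (\<lambda>i. X i \<omega>) A) * G (restrict (\<lambda>i. X i \<omega>) B))
           = expectation (\<lambda>\<omega>. F (restrict (\<lambda>i. X i \<omega>) A)) * expectation (\<lambda>\<omega>. G (restrict (\<lambda>i. X i \<omega>) B))"
proof -
  have "indep_var borel (F \<circ> (\<lambda>\<omega>. restrict (\<lambda>i. X i \<omega>) A)) borel (G \<circ> (\<lambda>\<omega>. restrict (\<lambda>i. X i \<omega>) B))"
    by (rule indep_var_compose[OF indep_var_restrict[OF ind AB] F G])
  then show "integrable M (\<lambda>\<omega>. F (restrict (\<lambda>i. X i \<omega>) A) * G (restrict (\<lambda>i. X i \<omega>) B))"
    and "expectation (\<lambda>\<omega>. F (restrict (\<lambda>i. X i \<omega>) A) * G (restrict (\<lambda>i. X i \<omega>) B))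
           = expectation (\<lambda>\<omega>. F (restrict (\<lambda>i. X i \<omega>) A)) * expectation (\<lambda>\<omega>. G (restrict (\<lambda>i. X i \<omega>) B))"
    using assms(7,8) by (simp_all add: comp_def indep_var_integrable indep_var_lebesgue_integral)
qed

lemma borel_measurable_xi:
  assumes [measurable]: "\<And>j. a j \<in> borel_measurable M" "\<And>j. b j \<in> borel_measurable M"
  shows "xi a b th N i \<in> borel_measurable M"
  unfolding xi_def cc_def by measurable

lemma borel_measurable_LL:
  assumes "\<And>j. a j \<in> borel_measurable M" "\<And>j. b j \<in> borel_measurable M"
  shows "LL a b th N k \<in> borel_measurable M"
proof (induction k)
  case (Suc k)
  then show ?case
    using borel_measurable_xi[OF assms] by (cases "Suc k \<le> 2") simp_all
qed simp

lemma index_ratio_lt_1: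
  assumes "j \<le> N" "1 \<le> th"
  shows "(real j - 1) / (real N * th\<^sup>2) < 1"
proof (cases "N = 0")
  case False
  have "real N * 1 \<le> real N * th\<^sup>2"
    using assms by (intro mult_left_mono) simp_all
  moreover have "real j \<le> real N"
    using assms by simp
  ultimately have "real j - 1 < real N * th\<^sup>2"
    by linarith
  moreover have "0 < real N * th\<^sup>2"
    using False assms by simp
  ultimately show ?thesis
    by (simp add: divide_less_eq)
qed simp

lemma gam_nonneg:
  assumes "1 \<le> j" "j \<le> N" "1 \<le> th"
  shows "0 \<le> gam th N j"
proof -
  have "0 \<le> (real j - 1) / (real N * th\<^sup>2)"
    using assms by simp
  with index_ratio_lt_1[OF assms(2,3)] show ?thesis
    by (simp add: gam_def mm_def rr_def)
qed

lemma rr_gt_1: "i \<le> N \<Longrightarrow> 1 \<le> th \<Longrightarrow> 1 < rr th N i"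
  using index_ratio_lt_1[of i N th] by (simp add: rr_def)

lemma LL_le_2 [simp]: "k \<le> 2 \<Longrightarrow> LL a b th N k = (\<lambda>_. 0)"
  by (cases k) auto

lemma LL_step:
  assumes "3 \<le> j"
  shows "LL a b th N j = (\<lambda>\<omega>. xi a b th N j \<omega> + gam th N j * LL a b th N (j - 1) \<omega>)"
  using assms by (cases j) auto

lemma LL_square_step:
  assumes "3 \<le> j"
  shows "(\<lambda>\<omega>. (LL a b th N j \<omega>)\<^sup>2)
           = (\<lambda>\<omega>. (xi a b th N j \<omega>)\<^sup>2 + 2 * gam th N j * (LL a b th N (j - 1) \<omega> * xi a b th N j \<omega>)
                   + (gam th N j)\<^sup>2 * (LL a b th N (j - 1) \<omega>)\<^sup>2)"
  unfolding LL_step[OF assms] by (simp add: power2_eq_square algebra_simps)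

lemma LL_cong:
  assumes "\<And>j. 3 \<le> j \<Longrightarrow> j \<le> k \<Longrightarrow> a j \<omega> = a' j \<omega>' \<and> b (j - 1) \<omega> = b' (j - 1) \<omega>'"
  shows "LL a b th N k \<omega> = LL a' b' th N k \<omega>'"
  using assms
proof (induction k)
  case (Suc k)
  then have "LL a b th N k \<omega> = LL a' b' th N k \<omega>'"
    by simp
  moreover have "xi a b th N (Suc k) \<omega> = xi a' b' th N (Suc k) \<omega>'" if "\<not> Suc k \<le> 2"
    using Suc.prems[of "Suc k"] that by (simp add: xi_def cc_def)
  ultimately show ?case
    by simp
qed simp

locale tridiagonal_model = prob_space M for M :: "'a measure" +
  fixes \<alpha> \<theta> :: real and N :: nat and a b :: "nat \<Rightarrow> 'a \<Rightarrow> real"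
  assumes alpha_pos: "0 < \<alpha>" and theta_ge_1: "1 \<le> \<theta>"
    and indep_entries: "indep_vars (\<lambda>_. borel) (\<lambda>k. case k of Inl i \<Rightarrow> a i | Inr i \<Rightarrow> b i)
          (Inl ` {1..N} \<union> Inr ` {1..N - 1})"
    and a_distributed: "\<And>i. 1 \<le> i \<Longrightarrow> i \<le> N \<Longrightarrow>
          distributed M lborel (a i) (\<lambda>x. ennreal (normal_density 0 (sqrt \<alpha>) x))"
    and b_distributed: "\<And>i. 1 \<le> i \<Longrightarrow> i \<le> N - 1 \<Longrightarrow>
          distributed M lborel (\<lambda>\<omega>. (2 / \<alpha>) * (b i \<omega>)\<^sup>2)
            (\<lambda>x. ennreal (chi2_density (2 * real i / \<alpha>) x))"
begin

definition entry :: "nat + nat \<Rightarrow> 'a \<Rightarrow> real" where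
  "entry = case_sum a b"

lemma entry_simps [simp]: "entry (Inl i) = a i" "entry (Inr i) = b i"
  by (simp_all add: entry_def)

lemma indep_vars_entry: "indep_vars (\<lambda>_. borel) entry (Inl ` {1..N} \<union> Inr ` {1..N - 1})"
  using indep_entries by (simp add: entry_def)

lemma a_moments:
  assumes "1 \<le> i" "i \<le> N"
  shows "integrable M (a i)" "expectation (a i) = 0"
    and "integrable M (\<lambda>\<omega>. (a i \<omega>)\<^sup>2)" "expectation (\<lambda>\<omega>. (a i \<omega>)\<^sup>2) = \<alpha>"
  using normal_distributed_moments[OF _ a_distributed[OF assms]] alpha_pos by simp_all

lemma c_moments:
  assumes "1 \<le> i" "i \<le> N - 1"
  shows "integrable M (cc (b i) i)" "expectation (cc (b i) i) = 0"
    and "integrable M (\<lambda>\<omega>. (cc (b i) i \<omega>)\<^sup>2)" "expectation (\<lambda>\<omega>. (cc (b i) i \<omega>)\<^sup>2) = \<alpha>"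
  using cc_moments[OF alpha_pos _ b_distributed[OF assms]] assms by simp_all

lemma a_c_uncorrelated:
  assumes "1 \<le> i" "i \<le> N" "1 \<le> j" "j \<le> N - 1"
  shows "integrable M (\<lambda>\<omega>. a i \<omega> * cc (b j) j \<omega>)" "expectation (\<lambda>\<omega>. a i \<omega> * cc (b j) j \<omega>) = 0"
proof -
  have "(\<lambda>f. f (Inl i)) \<in> borel_measurable (PiM {Inl i} (\<lambda>_. borel))"
    and "cc (\<lambda>f. f (Inr j)) j \<in> borel_measurable (PiM {Inr j} (\<lambda>_. borel))"
    unfolding cc_def by (measurable; rule measurable_PiM_eval_borel)+
  note indep = indep_vars_integral_restrict_mult[OF indep_vars_entry _ _ _ this]
  have "cc (\<lambda>f. f (Inr j)) j (restrict (\<lambda>k. entry k \<omega>) {Inr j})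
          = cc (b j) j \<omega>" for \<omega>
    by (simp add: cc_def)
  with indep show "integrable M (\<lambda>\<omega>. a i \<omega> * cc (b j) j \<omega>)"
    and "expectation (\<lambda>\<omega>. a i \<omega> * cc (b j) j \<omega>) = 0"
    using a_moments[OF assms(1,2)] c_moments[OF assms(3,4)] assms by simp_all
qed

lemma xi_moments:
  assumes "3 \<le> j" "j \<le> N"
  shows "integrable M (xi a b \<theta> N j)" "expectation (xi a b \<theta> N j) = 0"
    and "integrable M (\<lambda>\<omega>. (xi a b \<theta> N j \<omega>)\<^sup>2)"
    and "expectation (\<lambda>\<omega>. (xi a b \<theta> N j \<omega>)\<^sup>2)
           = \<alpha> / (real N * \<theta>\<^sup>2) * (1 / (rr \<theta> N j)\<^sup>2 + gam \<theta> N j / (rr \<theta> N (j - 1))\<^sup>2)"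
proof -
  define A where "A = 1 / (sqrt (real N) * \<theta> * rr \<theta> N j)"
  define B where "B = sqrt (gam \<theta> N j) / (sqrt (real N) * \<theta> * rr \<theta> N (j - 1))"
  define c where "c = cc (b (j - 1)) (j - 1)"
  have xi: "xi a b \<theta> N j = (\<lambda>\<omega>. A * a j \<omega> + B * c \<omega>)"
    by (auto simp: xi_def A_def B_def c_def gam_def)
  have xi2: "(\<lambda>\<omega>. (xi a b \<theta> N j \<omega>)\<^sup>2)
      = (\<lambda>\<omega>. A\<^sup>2 * (a j \<omega>)\<^sup>2 + 2 * A * B * (a j \<omega> * c \<omega>) + B\<^sup>2 * (c \<omega>)\<^sup>2)"
    unfolding xi by (auto simp: power2_eq_square algebra_simps)
  have j: "1 \<le> j" "j \<le> N" "1 \<le> j - 1" "j - 1 \<le> N - 1"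
    using assms by auto
  note a = a_moments[OF j(1,2)] and c = c_moments[OF j(3,4), folded c_def]
    and ac = a_c_uncorrelated[OF j, folded c_def]
  show "integrable M (xi a b \<theta> N j)" "expectation (xi a b \<theta> N j) = 0"
    unfolding xi using a c assms by simp_all
  show "integrable M (\<lambda>\<omega>. (xi a b \<theta> N j \<omega>)\<^sup>2)"
    unfolding xi2 using a c ac assms by simp
  have "expectation (\<lambda>\<omega>. (xi a b \<theta> N j \<omega>)\<^sup>2) = \<alpha> * (A\<^sup>2 + B\<^sup>2)"
    unfolding xi2 using a c ac by (simp add: mult.commute distrib_left)
  also have "A\<^sup>2 + B\<^sup>2 = 1 / (real N * \<theta>\<^sup>2) * (1 / (rr \<theta> N j)\<^sup>2 + gam \<theta> N j / (rr \<theta> N (j - 1))\<^sup>2)"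
    using gam_nonneg[OF j(1,2) theta_ge_1]
    by (simp add: A_def B_def power_mult_distrib power_divide add_divide_distrib ac_simps)
  finally show "expectation (\<lambda>\<omega>. (xi a b \<theta> N j \<omega>)\<^sup>2)
      = \<alpha> / (real N * \<theta>\<^sup>2) * (1 / (rr \<theta> N j)\<^sup>2 + gam \<theta> N j / (rr \<theta> N (j - 1))\<^sup>2)"
    by simp
qed

lemma LL_xi_uncorrelated:
  assumes "3 \<le> j" "j \<le> N" and L: "integrable M (LL a b \<theta> N (j - 1))"
  shows "integrable M (\<lambda>\<omega>. LL a b \<theta> N (j - 1) \<omega> * xi a b \<theta> N j \<omega>)"
    and "expectation (\<lambda>\<omega>. LL a b \<theta> N (j - 1) \<omega> * xi a b \<theta> N j \<omega>) = 0"
proof -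
  define A where "A = Inl ` {1..j - 1} \<union> Inr ` {1..j - 2}"
  define B where "B = {Inl j, Inr (j - 1)}"
  have LL: "LL (\<lambda>i f. f (Inl i)) (\<lambda>i f. f (Inr i)) \<theta> N (j - 1) (restrict (\<lambda>k. entry k \<omega>) A)
      = LL a b \<theta> N (j - 1) \<omega>" for \<omega>
    by (rule LL_cong) (auto simp: A_def inj_image_mem_iff)
  have xi: "xi (\<lambda>i f. f (Inl i)) (\<lambda>i f. f (Inr i)) \<theta> N j (restrict (\<lambda>k. entry k \<omega>) B)
      = xi a b \<theta> N j \<omega>" for \<omega>
    by (simp add: xi_def cc_def B_def)
  have sets: "A \<inter> B = {}" "A \<subseteq> Inl ` {1..N} \<union> Inr ` {1..N - 1}" "B \<subseteq> Inl ` {1..N} \<union> Inr ` {1..N - 1}"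
    using assms by (auto simp: A_def B_def inj_image_mem_iff)
  have F: "LL (\<lambda>i f. f (Inl i)) (\<lambda>i f. f (Inr i)) \<theta> N (j - 1) \<in> borel_measurable (PiM A (\<lambda>_. borel))"
    by (intro borel_measurable_LL measurable_PiM_eval_borel)
  have G: "xi (\<lambda>i f. f (Inl i)) (\<lambda>i f. f (Inr i)) \<theta> N j \<in> borel_measurable (PiM B (\<lambda>_. borel))"
    by (intro borel_measurable_xi measurable_PiM_eval_borel)
  note indep = indep_vars_integral_restrict_mult[OF indep_vars_entry sets F G]
  show "integrable M (\<lambda>\<omega>. LL a b \<theta> N (j - 1) \<omega> * xi a b \<theta> N j \<omega>)"
    and "expectation (\<lambda>\<omega>. LL a b \<theta> N (j - 1) \<omega> * xi a b \<theta> N j \<omega>) = 0"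
    using indep[unfolded LL xi] L xi_moments[OF assms(1,2)] by simp_all
qed

lemma integrable_LL:
  assumes "k \<le> N"
  shows "integrable M (LL a b \<theta> N k) \<and> integrable M (\<lambda>\<omega>. (LL a b \<theta> N k \<omega>)\<^sup>2)"
  using assms
proof (induction k)
  case (Suc k)
  show ?case
  proof (cases "Suc k \<le> 2")
    case False
    then have j: "3 \<le> Suc k" "Suc k \<le> N"
      using Suc.prems by auto
    with Suc.IH have "integrable M (LL a b \<theta> N k)" "integrable M (\<lambda>\<omega>. (LL a b \<theta> N k \<omega>)\<^sup>2)"
      by auto
    with LL_xi_uncorrelated[OF j] xi_moments[OF j] show ?thesis
      unfolding LL_square_step[OF j(1)] unfolding LL_step[OF j(1)] by simp
  qed simp
qed simp

lemma expectation_LL_square_step: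
  assumes "3 \<le> j" "j \<le> N"
  shows "expectation (\<lambda>\<omega>. (LL a b \<theta> N j \<omega>)\<^sup>2)
           = (gam \<theta> N j)\<^sup>2 * expectation (\<lambda>\<omega>. (LL a b \<theta> N (j - 1) \<omega>)\<^sup>2)
             + \<alpha> / (real N * \<theta>\<^sup>2) * (1 / (rr \<theta> N j)\<^sup>2 + gam \<theta> N j / (rr \<theta> N (j - 1))\<^sup>2)"
proof -
  have "j - 1 \<le> N"
    using assms by simp
  with integrable_LL have "integrable M (LL a b \<theta> N (j - 1))" "integrable M (\<lambda>\<omega>. (LL a b \<theta> N (j - 1) \<omega>)\<^sup>2)"
    by blast+
  with LL_xi_uncorrelated[OF assms] xi_moments[OF assms] show ?thesis
    unfolding LL_square_step[OF assms(1)] by simp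
qed

end

lemma (in tridiagonal_model) LL_variance_defect_bound:
  assumes "3 \<le> i" "i \<le> N"
  shows "\<bar>gam \<theta> N i * expectation (\<lambda>\<omega>. (LL a b \<theta> N (i - 1) \<omega>)\<^sup>2) / \<alpha> - dlt \<theta> N i\<bar>
           \<le> 8 / ((real N)\<^sup>2 * (rr \<theta> N i - 1) ^ 4)"
proof -
  define t where "t = 1 / (real N * \<theta>\<^sup>2)"
  have "0 < t" "real N * t \<le> 1"
    using assms theta_ge_1 by (simp_all add: t_def field_simps)
  then interpret sqrt_profile t N
    using assms by unfold_locales simp_all
  have rr: "rr \<theta> N j = 1 + s j" and mm: "mm \<theta> N j = 1 - s j" for j
    unfolding rr_def mm_def s_def by (simp_all add: t_def)
  have gam: "gam \<theta> N j = g j" for j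
    by (simp add: gam_def rr mm g_def)
  have dlt: "dlt \<theta> N i = g i * W (i - 1)"
  proof -
    have "Suc (i - 1) = i" "1 - s i = g i * (1 + s i)" "1 + s i \<noteq> 0"
      using assms s_pos[of i] by (simp_all add: g_def)
    then show ?thesis
      by (simp add: dlt_def rr mm W_def g_def[symmetric] right_diff_distrib)
  qed
  define V where "V j = expectation (\<lambda>\<omega>. (LL a b \<theta> N j \<omega>)\<^sup>2) / \<alpha>" for j
  have "\<bar>g i * V (i - 1) - g i * W (i - 1)\<bar> \<le> 8 * t\<^sup>2 / s i ^ 4"
  proof (rule variance_defect_bound)
    show "V 2 = 0"
      by (simp add: V_def)
    show "V j = (g j)\<^sup>2 * V (j - 1) + t * (1 / (1 + s j)\<^sup>2 + g j / (1 + s (j - 1))\<^sup>2)"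
      if "3 \<le> j" "j \<le> N" for j
      using expectation_LL_square_step[OF that] alpha_pos
      by (simp add: V_def rr gam t_def add_divide_distrib)
  qed (use assms in simp_all)
  also have "\<dots> \<le> 8 * (1 / real N)\<^sup>2 / s i ^ 4"
    using \<open>0 < t\<close> \<open>real N * t \<le> 1\<close> assms
    by (intro divide_right_mono mult_left_mono power_mono) (simp_all add: field_simps)
  also have "\<dots> = 8 / ((real N)\<^sup>2 * s i ^ 4)"
    by (simp add: power_divide)
  finally show ?thesis
    by (simp add: V_def gam dlt rr)
qed

theorem lemma10:
  fixes M :: "'a measure" and \<alpha> :: real and w :: "nat \<Rightarrow> real"
    and a b :: "nat \<Rightarrow> nat \<Rightarrow> 'a \<Rightarrow> real"
  assumes "prob_space M"
    and "\<alpha> > 0"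
    and indep: "\<And>N. prob_space.indep_vars M (\<lambda>_. borel)
          (\<lambda>k. case k of Inl i \<Rightarrow> a N i | Inr i \<Rightarrow> b N i)
          (Inl ` {1..N} \<union> Inr ` {1..N - 1})"
    and a_distr: "\<And>N i. 1 \<le> i \<Longrightarrow> i \<le> N \<Longrightarrow>
          distributed M lborel (a N i) (\<lambda>x. ennreal (normal_density 0 (sqrt \<alpha>) x))"
    and b_nonneg: "\<And>N i \<omega>. 1 \<le> i \<Longrightarrow> i \<le> N - 1 \<Longrightarrow> \<omega> \<in> space M \<Longrightarrow> b N i \<omega> \<ge> 0"
    and b_distr: "\<And>N i. 1 \<le> i \<Longrightarrow> i \<le> N - 1 \<Longrightarrow>
          distributed M lborel (\<lambda>\<omega>. (2 / \<alpha>) * (b N i \<omega>)\<^sup>2)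
            (\<lambda>x. ennreal (chi2_density (2 * real i / \<alpha>) x))"
    and w_pos: "\<And>N. w N > 0"
    and w_lim1: "((\<lambda>N. (ln (ln (real N)))\<^sup>2 / w N) \<longlongrightarrow> 0) sequentially"
    and w_lim2: "((\<lambda>N. w N / (ln (real N))\<^sup>2) \<longlongrightarrow> 0) sequentially"
  shows "\<exists>C>0. \<forall>N i. 3 \<le> i \<and> i \<le> N \<longrightarrow>
           \<bar>gam (theta w N) N i
              * prob_space.expectation M (\<lambda>\<omega>. (LL (a N) (b N) (theta w N) N (i - 1) \<omega>)\<^sup>2) / \<alpha>
            - dlt (theta w N) N i\<bar>
           < C / ((real N)\<^sup>2 * (rr (theta w N) N i - 1) ^ 4)"
proof -
  have bound: "\<bar>gam (theta w N) N i * prob_space.expectation M (\<lambda>\<omega>. (LL (a N) (b N) (theta w N) N (i - 1) \<omega>)\<^sup>2) / \<alpha>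
                  - dlt (theta w N) N i\<bar> < 9 / ((real N)\<^sup>2 * (rr (theta w N) N i - 1) ^ 4)"
    if "3 \<le> i" "i \<le> N" for N i :: nat
  proof -
    have "1 \<le> theta w N"
      using w_pos[of N] by (simp add: theta_def)
    then interpret tridiagonal_model M \<alpha> "theta w N" N "a N" "b N"
      using assms by (simp add: tridiagonal_model_def tridiagonal_model_axioms_def)
    have "0 < (real N)\<^sup>2 * (rr (theta w N) N i - 1) ^ 4"
      using that rr_gt_1[OF that(2) \<open>1 \<le> theta w N\<close>] by simp
    then show ?thesis
      using LL_variance_defect_bound[OF that] divide_strict_right_mono[of 8 9] by fastforce
  qed
  then show ?thesis
    by (intro exI[of _ 9]) simp
qed

end
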